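(* Let $R$ be an associative ring with identity and involution $*$, and let $a\in R^{\#}\cap R^{\dagger}$. Then $a\in R^{SEP}$ if and only if $a(a^{\#})^*a^{\dagger}$ and $a^{\dagger}a^2$ are left $a^{\dagger}aa^{\#}$-equivalent, i.e. $a^{\dagger}aa^{\#}\,a(a^{\#})^*a^{\dagger}=a^{\dagger}aa^{\#}\,a^{\dagger}a^2$.
   Context: An involution on $R$ is a map $x\mapsto x^*$ with $(x^* )^*=x$, $(x+y)^*=x^*+y^*$, $(xy)^*=y^*x^*$. An element $a$ is Moore–Penrose invertible if there is $b$ with $aba=a$, $bab=b$, $(ab)^*=ab$, $(ba)^*=ba$; such $b$ is unique, denoted $a^{\dagger}$, and $R^{\dagger}$ is the set of such $a$. An element $a$ is group invertible if there is $b$ with $aba=a$, $bab=b$, $ab=ba$; such $b$ is unique, denoted $a^{\#}$, and $R^{\#}$ is the set of such $a$. For $a\in R^{\#}\cap R^{\dagger}$, $a$ is SEP if $a^*=a^{\dagger}=a^{\#}$; $R^{SEP}$ denotes the set of SEP elements. For $x,b,c\in R$, $b$ and $c$ are left $x$-equivalent if $xb=xc$. *)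

theory Defs
  imports Main
begin

definition involution :: "('a::ring_1 \<Rightarrow> 'a) \<Rightarrow> bool" where
  "involution s \<longleftrightarrow> (\<forall>x. s (s x) = x) \<and> (\<forall>x y. s (x + y) = s x + s y)
     \<and> (\<forall>x y. s (x * y) = s y * s x)"

definition is_mp_inverse :: "('a::ring_1 \<Rightarrow> 'a) \<Rightarrow> 'a \<Rightarrow> 'a \<Rightarrow> bool" where
  "is_mp_inverse s a b \<longleftrightarrow> a * b * a = a \<and> b * a * b = b \<and> s (a * b) = a * b \<and> s (b * a) = b * a"

definition mp_invertible :: "('a::ring_1 \<Rightarrow> 'a) \<Rightarrow> 'a \<Rightarrow> bool" where
  "mp_invertible s a \<longleftrightarrow> (\<exists>b. is_mp_inverse s a b)"

definition mp_inv :: "('a::ring_1 \<Rightarrow> 'a) \<Rightarrow> 'a \<Rightarrow> 'a" where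
  "mp_inv s a = (THE b. is_mp_inverse s a b)"

definition is_group_inverse :: "'a::ring_1 \<Rightarrow> 'a \<Rightarrow> bool" where
  "is_group_inverse a b \<longleftrightarrow> a * b * a = a \<and> b * a * b = b \<and> a * b = b * a"

definition group_invertible :: "'a::ring_1 \<Rightarrow> bool" where
  "group_invertible a \<longleftrightarrow> (\<exists>b. is_group_inverse a b)"

definition group_inv :: "'a::ring_1 \<Rightarrow> 'a" where
  "group_inv a = (THE b. is_group_inverse a b)"

definition SEP :: "('a::ring_1 \<Rightarrow> 'a) \<Rightarrow> 'a \<Rightarrow> bool" where
  "SEP s a \<longleftrightarrow> group_invertible a \<and> mp_invertible s a
     \<and> s a = mp_inv s a \<and> mp_inv s a = group_inv a"

definition left_equiv :: "'a::ring_1 \<Rightarrow> 'a \<Rightarrow> 'a \<Rightarrow> bool" where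
  "left_equiv x b c \<longleftrightarrow> x * b = x * c"

end

theory Submission
  imports Defs
begin

(* With b = a\<dagger> and g = a#, left multiplication by a turns the left-equivalence into
   a s(g) b = a.  This identity forces a a b = a, hence a b = g a = a g; so a g is
   self-adjoint, g is a Moore-Penrose inverse of a, and g = b (a is EP).  For EP elements
   p = a b = b a is a self-adjoint idempotent, and a s(b) b = a gives s(b) b = p and
   then s(b) = s(b) p = p a = a, i.e. s(a) = a\<dagger>. *)

lemma involutionD:
  assumes "involution s"
  shows "s (s x) = x" and "s (x * y) = s y * s x"
  using assms unfolding involution_def by auto

lemma is_mp_inverse_unique:
  assumes s: "involution s" and x: "is_mp_inverse s a x" and y: "is_mp_inverse s a y"
  shows "x = y"
proof -
  note star = involutionD[OF s]
  have x1: "a * x * a = a" "x * a * x = x" "s (a * x) = a * x" "s (x * a) = x * a"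
    and y1: "a * y * a = a" "y * a * y = y" "s (a * y) = a * y" "s (y * a) = y * a"
    using x y unfolding is_mp_inverse_def by auto
  have ax: "a * x = a * y"
  proof -
    have "a * x = (a * y) * (a * x)" by (metis y1(1) mult.assoc)
    also have "\<dots> = s (a * x * (a * y))" using x1 y1 star by simp
    also have "\<dots> = a * y" by (metis x1(1) y1(3) mult.assoc)
    finally show ?thesis .
  qed
  have xa: "x * a = y * a"
  proof -
    have "x * a = (x * a) * (y * a)" by (metis y1(1) mult.assoc)
    also have "\<dots> = s (y * a * (x * a))" using x1 y1 star by simp
    also have "\<dots> = y * a" by (metis x1(1) y1(4) mult.assoc)
    finally show ?thesis .
  qed
  have "x = x * a * x" using x1 by simp
  also have "\<dots> = y * a * y" by (metis ax xa mult.assoc)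
  finally show ?thesis using y1 by simp
qed

lemma is_group_inverse_unique:
  assumes x: "is_group_inverse a x" and y: "is_group_inverse a y"
  shows "x = y"
proof -
  have x1: "a * x * a = a" "x * a * x = x" "a * x = x * a"
    and y1: "a * y * a = a" "y * a * y = y" "a * y = y * a"
    using x y unfolding is_group_inverse_def by auto
  have ax: "a * x = a * y"
  proof -
    have "a * x = (y * a) * (a * x)" by (metis y1(1,3) mult.assoc)
    also have "\<dots> = y * a" by (metis x1(1,3) mult.assoc)
    finally show ?thesis using y1(3) by simp
  qed
  have "x = x * a * x" using x1 by simp
  also have "\<dots> = y * a * y" by (metis ax x1(3) y1(3) mult.assoc)
  finally show ?thesis using y1 by simp
qed

lemma mp_inv_eq:
  assumes "involution s" and "is_mp_inverse s a b"
  shows "mp_inv s a = b"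
  unfolding mp_inv_def using assms is_mp_inverse_unique by blast

lemma group_inv_eq:
  assumes "is_group_inverse a g"
  shows "group_inv a = g"
  unfolding group_inv_def using assms is_group_inverse_unique by blast

lemma is_mp_inverse_if_group_inverse:
  assumes "is_group_inverse a g" and "s (a * g) = a * g"
  shows "is_mp_inverse s a g"
  using assms unfolding is_group_inverse_def is_mp_inverse_def by metis

lemma star_eq_mp_inverse_if_EP:
  assumes s: "involution s" and mp: "is_mp_inverse s a b" and group: "is_group_inverse a b"
    and partial: "a * s b * b = a"
  shows "s a = b"
proof -
  note star = involutionD[OF s]
  define p where "p = b * a"
  have p: "s p = p" "p * a = a" "p * b = b" "b * p = b"
    using mp group unfolding p_def is_mp_inverse_def is_group_inverse_def
    by (auto simp: mult.assoc)
  have p_star: "s b * p = s b" "p * s b = s b"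
    using star(2)[of p b] star(2)[of b p] p by simp_all
  have "s b * b = p * s b * b" using p_star by simp
  also have "\<dots> = p" using partial by (simp add: p_def mult.assoc)
  finally have "s b * b = p" .
  then have "s b = a"
    using p_star(1) p(2) by (metis p_def mult.assoc)
  then show ?thesis using star(1) by metis
qed

lemma left_equiv_iff:
  assumes inner: "a * b * a = a" and group: "is_group_inverse a g"
  shows "left_equiv (b * a * g) (a * t * b) (b * a ^ 2) \<longleftrightarrow> a * t * b = a"
proof -
  have g: "a * g * a = a" "g * a * g = g" "a * g = g * a"
    using group unfolding is_group_inverse_def by auto
  have gaa: "g * a * a = a" by (metis g(1,3))
  have agbaa: "a * g * b * (a * a) = a" by (metis gaa inner g(3) mult.assoc)
  have gbaa: "g * b * (a * a) = g * a" by (metis agbaa g(2) mult.assoc)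
  have cancel: "a * (b * a * g * x) = a * g * x" for x
    by (metis inner mult.assoc)
  show ?thesis
  proof
    assume "left_equiv (b * a * g) (a * t * b) (b * a ^ 2)"
    then have equiv: "a * g * (a * t * b) = a * g * (b * (a * a))"
      using cancel by (metis left_equiv_def power2_eq_square)
    have "a * t * b = a * g * (a * t * b)" by (metis g(1) mult.assoc)
    also have "\<dots> = a" using equiv agbaa by (simp add: mult.assoc)
    finally show "a * t * b = a" .
  next
    assume "a * t * b = a"
    then show "left_equiv (b * a * g) (a * t * b) (b * a ^ 2)"
      unfolding left_equiv_def power2_eq_square using gbaa by (simp add: mult.assoc)
  qed
qed

lemma SEP_iff:
  assumes s: "involution s" and mp: "is_mp_inverse s a b" and group: "is_group_inverse a g"
  shows "SEP s a \<longleftrightarrow> a * s g * b = a"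
proof -
  note star = involutionD[OF s]
  have b: "b * a * b = b" "s (a * b) = a * b"
    using mp unfolding is_mp_inverse_def by auto
  have g: "a * g * a = a" "a * g = g * a"
    using group unfolding is_group_inverse_def by auto
  have gaa: "g * a * a = a" by (metis g)
  have "SEP s a \<longleftrightarrow> s a = b \<and> b = g"
    unfolding SEP_def mp_inv_eq[OF s mp] group_inv_eq[OF group]
      mp_invertible_def group_invertible_def
    using mp group by blast
  also have "\<dots> \<longleftrightarrow> a * s g * b = a"
  proof
    assume "s a = b \<and> b = g"
    then show "a * s g * b = a" using star(1) g gaa by (metis mult.assoc)
  next
    assume partial: "a * s g * b = a"
    have "a * (a * b) = a" by (metis partial b(1) mult.assoc)
    then have "a * b = g * a" by (metis gaa mult.assoc)
    then have "is_mp_inverse s a g"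
      using is_mp_inverse_if_group_inverse group b(2) g(2) by metis
    then have "b = g" using is_mp_inverse_unique[OF s mp] by blast
    then show "s a = b \<and> b = g"
      using star_eq_mp_inverse_if_EP[OF s mp] group partial by blast
  qed
  finally show ?thesis .
qed

theorem theorem5p4:
  fixes s :: "'a::ring_1 \<Rightarrow> 'a" and a :: 'a
  assumes "involution s"
    and "group_invertible a" and "mp_invertible s a"
  shows "SEP s a \<longleftrightarrow>
    left_equiv (mp_inv s a * a * group_inv a)
      (a * s (group_inv a) * mp_inv s a) (mp_inv s a * a ^ 2)"
proof -
  obtain b where mp: "is_mp_inverse s a b"
    using assms(3) unfolding mp_invertible_def by blast
  obtain g where group: "is_group_inverse a g"
    using assms(2) unfolding group_invertible_def by blast
  have "a * b * a = a" using mp unfolding is_mp_inverse_def by simp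
  then show ?thesis
    using SEP_iff[OF assms(1) mp group] left_equiv_iff[OF _ group]
      mp_inv_eq[OF assms(1) mp] group_inv_eq[OF group]
    by simp
qed

end
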